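(* Assume $L$ satisfies (L1),(L2) and $W$ satisfies (W1)–(W6) (as in the context). Then there exist $\alpha,\varrho>0$ such that $I(u)\ge\alpha$ for all $u\in S=\{u\in E^+:\|u\|=\varrho\}$.
   Context: $L\in C(\mathbb{R},\mathbb{R}^{N\times N})$ symmetric-matrix valued, $W\in C^1(\mathbb{R}\times\mathbb{R}^N,\mathbb{R})$, $\nabla W$ the gradient in $x$, $\widetilde W(t,x)=2W(t,x)-(\nabla W(t,x),x)$, $l(t)=\min_{|x|=1}(L(t)x,x)$. (L1): $\exists\,\alpha_0>1,M>0$ with $\lim_{R\to\infty}\operatorname{meas}\{t:|t|\ge R,\ l(t)\le M|t|\ln^{\alpha_0}|t|\}=0$. (L2): $\exists L_0>0$ with $(L(t)x,x)\ge-L_0|x|^2$. $\mathcal{H}$ is the self-adjoint extension in $L^2(\mathbb{R},\mathbb{R}^N)$ of $-\frac{d^2}{dt^2}+L(t)$, with eigenvalues $\lambda_1\le\lambda_2\le\cdots\to\infty$; $\bar n$ is the number of nonpositive eigenvalues. $E=\mathfrak{D}(|\mathcal{H}|^{1/2})$, $E=E^-\oplus E^0\oplus E^+$ (spans of eigenfunctions with negative, zero, positive eigenvalues), norm $\|u\|^2=\||\mathcal{H}|^{1/2}u\|_{L^2}^2+\|u^0\|_{L^2}^2$. $I(u)=\frac12\|u^+\|^2-\frac12\|u^-\|^2-\int_{\mathbb{R}}W(t,u(t))\,dt$. (W1) $W(t,0)=0$, $|\nabla W(t,x)|\le b_1|x|$. (W2) $\widetilde W(t,x)\ge b_2|x|^\mu$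 for $|x|\ge r_1$, with $b_2,r_1>0,\mu>1$. (W3) $\widetilde W(t,x)\ge-b_3|x|$ for $|x|<r_1$, $b_3>0$. (W4) $|W(t,x)|\le\frac{\lambda_{\bar n+1}-\sigma_0}{2}|x|^2$ for $|x|\le r_2$, $r_2,\sigma_0>0$. (W5) $W(t,x)\ge(\frac{\lambda_{\bar n+1}}2+\varepsilon_0)|x|^2$ for $|x|\ge r_\infty$, $\varepsilon_0,r_\infty>0$. (W6) $W\ge0$. All for all $t\in\mathbb{R}$. *)

theory Defs
  imports "HOL-Analysis.Analysis"
begin

text \<open>Functions \<real> \<rightarrow> \<real>^N are modelled as real \<Rightarrow> real^'n, N = CARD('n).\<close>

definition L2 :: "(real \<Rightarrow> real^'n) set" where
  "L2 = {u. u \<in> borel_measurable lebesgue \<and> integrable lebesgue (\<lambda>t. (norm (u t))\<^sup>2)}"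

definition l2_inner :: "(real \<Rightarrow> real^'n) \<Rightarrow> (real \<Rightarrow> real^'n) \<Rightarrow> real" where
  "l2_inner u v = (\<integral>t. u t \<bullet> v t \<partial>lebesgue)"

definition lmin :: "(real \<Rightarrow> real^'n^'n) \<Rightarrow> real \<Rightarrow> real" where
  "lmin L t = Inf {(L t *v x) \<bullet> x | x. norm x = 1}"

text \<open>u is an eigenfunction of H = -d^2/dt^2 + L(t) with eigenvalue lam: a (C^2) L^2 solution
  of -u'' + L(t)u = lam u. (Since L is bounded below, the minimal operator is essentially
  self-adjoint and H is the maximal operator.)\<close>
definition is_eigenfun :: "(real \<Rightarrow> real^'n^'n) \<Rightarrow> real \<Rightarrow> (real \<Rightarrow> real^'n) \<Rightarrow> bool" where
  "is_eigenfun L lam u \<longleftrightarrow> u \<in> L2 \<and>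
     (\<exists>u' u''. \<forall>t. (u has_vector_derivative u' t) (at t) \<and>
                    (u' has_vector_derivative u'' t) (at t) \<and>
                    - u'' t + L t *v u t = lam *\<^sub>R u t)"

text \<open>(e k, lam k) is an orthonormal basis of L^2 consisting of eigenfunctions of H,
  eigenvalues listed in nondecreasing order with multiplicity (0-indexed: lam 0 = lambda_1).\<close>
definition eigen_onb :: "(real \<Rightarrow> real^'n^'n) \<Rightarrow> (nat \<Rightarrow> real) \<Rightarrow> (nat \<Rightarrow> real \<Rightarrow> real^'n) \<Rightarrow> bool" where
  "eigen_onb L lam e \<longleftrightarrow> mono lam \<and> (\<forall>k. is_eigenfun L (lam k) (e k)) \<and>
     (\<forall>j k. l2_inner (e j) (e k) = (if j = k then 1 else 0)) \<and>
     (\<forall>u\<in>L2. (\<lambda>k. (l2_inner u (e k))\<^sup>2) sums l2_inner u u)"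

text \<open>nbar = number of nonpositive eigenvalues; lambda_{nbar+1} is lam nbar (0-indexed).\<close>
definition nbar :: "(nat \<Rightarrow> real) \<Rightarrow> nat" where
  "nbar lam = card {k. lam k \<le> 0}"

definition Espace :: "(nat \<Rightarrow> real) \<Rightarrow> (nat \<Rightarrow> real \<Rightarrow> real^'n) \<Rightarrow> (real \<Rightarrow> real^'n) set" where
  "Espace lam e = {u \<in> L2. summable (\<lambda>k. \<bar>lam k\<bar> * (l2_inner u (e k))\<^sup>2)}"

definition Eplus :: "(nat \<Rightarrow> real) \<Rightarrow> (nat \<Rightarrow> real \<Rightarrow> real^'n) \<Rightarrow> (real \<Rightarrow> real^'n) set" where
  "Eplus lam e = {u \<in> Espace lam e. \<forall>k. lam k \<le> 0 \<longrightarrow> l2_inner u (e k) = 0}"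

text \<open>||u||^2 = || |H|^{1/2} u ||^2_{L^2} + ||u^0||^2_{L^2}.\<close>
definition Enorm :: "(nat \<Rightarrow> real) \<Rightarrow> (nat \<Rightarrow> real \<Rightarrow> real^'n) \<Rightarrow> (real \<Rightarrow> real^'n) \<Rightarrow> real" where
  "Enorm lam e u = sqrt (\<Sum>k. (if lam k = 0 then 1 else \<bar>lam k\<bar>) * (l2_inner u (e k))\<^sup>2)"

definition Ifun :: "(nat \<Rightarrow> real) \<Rightarrow> (nat \<Rightarrow> real \<Rightarrow> real^'n) \<Rightarrow> (real \<Rightarrow> real^'n \<Rightarrow> real)
                    \<Rightarrow> (real \<Rightarrow> real^'n) \<Rightarrow> real" where
  "Ifun lam e W u =
     (1/2) * (\<Sum>k. (if lam k > 0 then lam k else 0) * (l2_inner u (e k))\<^sup>2)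
   - (1/2) * (\<Sum>k. (if lam k < 0 then - lam k else 0) * (l2_inner u (e k))\<^sup>2)
   - (\<integral>t. W t (u t) \<partial>lebesgue)"

end

theory Submission
  imports Defs
begin

(* For u in E^+ with coefficients c_k = (u, e_k), the partial sums v_K = sum_{k<K} c_k e_k are
   C^2 and satisfy -v_K'' + L v_K = sum_{k<K} lambda_k c_k e_k. Multiplying by v_K, integrating
   by parts and using (L2) gives the one-dimensional Sobolev-type bound
     |v_K(t)|^2 <= (2 + L0) ||v_K||_{L^2}^2 + sum_{k<K} lambda_k c_k^2 <= C ||u||^2,
   uniformly in K and t, because lambda_k >= lambda_{nbar+1} > 0 whenever c_k <> 0.
   Since v_K -> u in L^2, |u| <= sqrt C ||u|| almost everywhere, so on a small sphere
   ||u|| = rho condition (W4) applies pointwise and gives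
     int W(t, u) <= (lambda_{nbar+1} - sigma0)/2 ||u||_{L^2}^2
                 <= (lambda_{nbar+1} - sigma0)/(2 lambda_{nbar+1}) ||u||^2,
   whence I(u) >= sigma0 rho^2 / (2 lambda_{nbar+1}). Only (L2) and (W4) are needed; (W4) itself
   forces lambda_{nbar+1} >= sigma0 > 0. *)

lemma integral_interval_near_integral_UNIV:
  fixes f :: "real \<Rightarrow> real"
  assumes "f integrable_on UNIV" "\<epsilon> > 0"
  obtains B where "\<And>a b. a \<le> -B \<Longrightarrow> B \<le> b \<Longrightarrow> \<bar>integral {a..b} f - integral UNIV f\<bar> < \<epsilon>"
proof -
  have "\<exists>B>0. \<forall>a b. ball 0 B \<subseteq> cbox a b \<longrightarrow>
      norm (integral (cbox a b) f - integral UNIV f) < \<epsilon>"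
    using assms has_integral_alt'[of f "integral UNIV f" UNIV] by (auto simp: integrable_integral)
  then obtain B where B: "\<And>a b. ball 0 B \<subseteq> cbox a b \<Longrightarrow>
      norm (integral (cbox a b) f - integral UNIV f) < \<epsilon>"
    by blast
  have "\<bar>integral {a..b} f - integral UNIV f\<bar> < \<epsilon>" if "a \<le> -B" "B \<le> b" for a b
  proof -
    have "ball 0 B \<subseteq> cbox a b" using that by (auto simp: dist_real_def)
    then show ?thesis using B by simp
  qed
  then show thesis by (rule that)
qed

lemma exists_lt_of_integral_le:
  fixes g :: "real \<Rightarrow> real"
  assumes "g integrable_on {a..a+1}" "integral {a..a+1} g \<le> P" "\<delta> > 0"
  obtains s where "s \<in> {a..a+1}" "g s < P + \<delta>"
proof -
  have "\<not> (\<forall>x\<in>{a..a+1}. P + \<delta> \<le> g x)"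
  proof
    assume "\<forall>x\<in>{a..a+1}. P + \<delta> \<le> g x"
    then have "integral {a..a+1} (\<lambda>x. P + \<delta>) \<le> integral {a..a+1} g"
      by (intro integral_le assms(1)) auto
    then show False using assms(2,3) by simp
  qed
  then show thesis using that by (auto simp: not_le)
qed

lemma deriv_le_at_top_of_integral_bounded:
  fixes g g' :: "real \<Rightarrow> real"
  assumes deriv: "\<And>x. (g has_real_derivative g' x) (at x)" and nonneg: "\<And>x. g x \<ge> 0"
    and bounded: "\<And>a b. integral {a..b} g \<le> P" and "\<delta> > 0"
  obtains b where "b \<ge> B" "g' b \<le> \<delta>"
proof -
  have "\<not> (\<forall>x\<ge>B. \<delta> \<le> g' x)"
  proof
    assume steep: "\<forall>x\<ge>B. \<delta> \<le> g' x"
    have linear_growth: "\<delta> * (x - B) \<le> g x" if "x \<ge> B" for x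
    proof -
      have "g B - \<delta> * B \<le> g x - \<delta> * x"
        by (rule DERIV_nonneg_imp_nondecreasing[OF that])
          (use steep in \<open>auto intro!: derivative_eq_intros deriv\<close>)
      then show ?thesis using nonneg[of B] by (simp add: algebra_simps)
    qed
    define c where "c = B + (max P 0 + 1) / \<delta>"
    have "c \<ge> B" and "\<delta> * (c - B) = max P 0 + 1"
      using \<open>\<delta> > 0\<close> by (simp_all add: c_def)
    have "g integrable_on {c..c+1}"
      using deriv by (intro integrable_continuous_real continuous_at_imp_continuous_on)
        (auto intro: DERIV_isCont)
    then obtain s where "s \<in> {c..c+1}" "g s < P + 1"
      using exists_lt_of_integral_le bounded zero_less_one by blast
    moreover have "\<delta> * (c - B) \<le> \<delta> * (s - B)"
      using \<open>s \<in> {c..c+1}\<close> \<open>\<delta> > 0\<close> by (intro mult_left_mono) auto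
    ultimately show False
      using linear_growth[of s] \<open>c \<ge> B\<close> \<open>\<delta> * (c - B) = max P 0 + 1\<close> by auto
  qed
  then show thesis using that by (auto simp: not_le)
qed

lemma deriv_ge_at_bot_of_integral_bounded:
  fixes g g' :: "real \<Rightarrow> real"
  assumes deriv: "\<And>x. (g has_real_derivative g' x) (at x)" and nonneg: "\<And>x. g x \<ge> 0"
    and bounded: "\<And>a b. integral {a..b} g \<le> P" and "\<delta> > 0"
  obtains a where "a \<le> A" "g' a \<ge> - \<delta>"
proof -
  have "((\<lambda>x. g (- x)) has_real_derivative - g' (- x)) (at x)" for x
    using DERIV_chain2[OF deriv DERIV_minus[OF DERIV_ident]] by simp
  moreover have "integral {a..b} (\<lambda>x. g (- x)) \<le> P" for a b
    using bounded[of "-b" "-a"] Henstock_Kurzweil_Integration.integral_reflect_real[of "-a" "-b" g]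
    by simp
  ultimately obtain b where "b \<ge> - A" "- g' (- b) \<le> \<delta>"
    using deriv_le_at_top_of_integral_bounded[where g="\<lambda>x. g (- x)" and g'="\<lambda>x. - g' (- x)"]
      nonneg \<open>\<delta> > 0\<close> by blast
  then show thesis using that[of "- b"] by simp
qed

lemma has_real_derivative_inner:
  fixes v w :: "real \<Rightarrow> 'a::real_inner"
  assumes "(v has_vector_derivative v') (at t)" "(w has_vector_derivative w') (at t)"
  shows "((\<lambda>x. v x \<bullet> w x) has_real_derivative (v' \<bullet> w t + v t \<bullet> w')) (at t)"
  using has_derivative_inner[OF assms[unfolded has_vector_derivative_def]]
  unfolding has_field_derivative_def
  by (rule has_derivative_eq_rhs) (auto simp: algebra_simps inner_add_right inner_add_left fun_eq_iff)

lemma sq_norm_increment_le: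
  fixes v v' :: "real \<Rightarrow> 'a::real_inner"
  assumes deriv: "\<And>x. (v has_vector_derivative v' x) (at x)"
    and cont: "continuous_on {s..t} v'" and "s \<le> t"
  shows "(norm (v t))\<^sup>2 - (norm (v s))\<^sup>2
    \<le> integral {s..t} (\<lambda>x. (norm (v x))\<^sup>2) + integral {s..t} (\<lambda>x. (norm (v' x))\<^sup>2)"
proof -
  have cont_v: "continuous_on {s..t} v"
    using deriv by (meson continuous_at_imp_continuous_on has_vector_derivative_continuous)
  have "((\<lambda>x. 2 * (v x \<bullet> v' x)) has_integral (norm (v t))\<^sup>2 - (norm (v s))\<^sup>2) {s..t}"
    unfolding power2_norm_eq_inner
    by (rule fundamental_theorem_of_calculus[OF \<open>s \<le> t\<close>])
      (use has_real_derivative_inner[OF deriv deriv] in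
        \<open>auto simp: has_real_derivative_iff_has_vector_derivative inner_commute
          intro: has_vector_derivative_at_within\<close>)
  moreover have "((\<lambda>x. (norm (v x))\<^sup>2 + (norm (v' x))\<^sup>2) has_integral
      integral {s..t} (\<lambda>x. (norm (v x))\<^sup>2) + integral {s..t} (\<lambda>x. (norm (v' x))\<^sup>2)) {s..t}"
    using cont cont_v
    by (intro has_integral_add integrable_integral integrable_continuous_real continuous_intros)
  moreover have "2 * (v x \<bullet> v' x) \<le> (norm (v x))\<^sup>2 + (norm (v' x))\<^sup>2" for x
    using norm_ge_zero[of "v x - v' x"] zero_le_power2[of "norm (v x - v' x)"]
    unfolding power2_norm_eq_inner by (simp add: inner_diff_left inner_diff_right inner_commute)
  ultimately show ?thesis by (rule has_integral_le)
qed

lemma integral_sq_norm_deriv_le: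
  fixes v v' v'' f :: "real \<Rightarrow> 'a::real_inner"
  assumes d1: "\<And>x. (v has_vector_derivative v' x) (at x)"
    and d2: "\<And>x. (v' has_vector_derivative v'' x) (at x)"
    and ineq: "\<And>x. - (v'' x \<bullet> v x) \<le> L0 * (norm (v x))\<^sup>2 + f x \<bullet> v x"
    and fv: "(\<lambda>x. f x \<bullet> v x) integrable_on {a..b}" and "a \<le> b"
  shows "integral {a..b} (\<lambda>x. (norm (v' x))\<^sup>2)
    \<le> v' b \<bullet> v b - v' a \<bullet> v a + L0 * integral {a..b} (\<lambda>x. (norm (v x))\<^sup>2)
       + integral {a..b} (\<lambda>x. f x \<bullet> v x)"
proof -
  have cont: "continuous_on {a..b} v" "continuous_on {a..b} v'"
    using d1 d2 by (meson continuous_at_imp_continuous_on has_vector_derivative_continuous)+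
  have v'_int: "(\<lambda>x. (norm (v' x))\<^sup>2) integrable_on {a..b}"
    and v_int: "(\<lambda>x. L0 * (norm (v x))\<^sup>2) integrable_on {a..b}"
    using cont by (auto intro!: integrable_continuous_real continuous_intros)
  have ftc: "((\<lambda>x. v'' x \<bullet> v x + (norm (v' x))\<^sup>2) has_integral (v' b \<bullet> v b - v' a \<bullet> v a)) {a..b}"
    by (rule fundamental_theorem_of_calculus[OF \<open>a \<le> b\<close>])
      (use has_real_derivative_inner[OF d2 d1] in
        \<open>auto simp: has_real_derivative_iff_has_vector_derivative power2_norm_eq_inner
          intro: has_vector_derivative_at_within\<close>)
  have "((\<lambda>x. (norm (v' x))\<^sup>2) has_integral
      (v' b \<bullet> v b - v' a \<bullet> v a) + integral {a..b} (\<lambda>x. - (v'' x \<bullet> v x))) {a..b}"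
  proof -
    have "(\<lambda>x. - (v'' x \<bullet> v x)) integrable_on {a..b}"
      using integrable_diff[OF v'_int has_integral_integrable[OF ftc]] by simp
    from has_integral_add[OF ftc integrable_integral[OF this]] show ?thesis by simp
  qed
  moreover have "integral {a..b} (\<lambda>x. - (v'' x \<bullet> v x))
      \<le> integral {a..b} (\<lambda>x. L0 * (norm (v x))\<^sup>2 + f x \<bullet> v x)"
    using integrable_diff[OF v'_int has_integral_integrable[OF ftc]] v_int fv ineq
    by (intro integral_le integrable_add) auto
  ultimately show ?thesis
    using integral_add[OF v_int fv] by (simp add: integral_unique)
qed

lemma sq_norm_le_interval_bound:
  fixes v v' v'' f :: "real \<Rightarrow> 'a::real_inner"
  assumes d1: "\<And>x. (v has_vector_derivative v' x) (at x)"
    and d2: "\<And>x. (v' has_vector_derivative v'' x) (at x)"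
    and ineq: "\<And>x. - (v'' x \<bullet> v x) \<le> L0 * (norm (v x))\<^sup>2 + f x \<bullet> v x"
    and fv: "(\<lambda>x. f x \<bullet> v x) integrable_on {a..b}" and "a \<le> s" "s \<le> t" "t \<le> b"
  shows "(norm (v t))\<^sup>2 \<le> (norm (v s))\<^sup>2 + (1 + L0) * integral {a..b} (\<lambda>x. (norm (v x))\<^sup>2)
    + (v' b \<bullet> v b - v' a \<bullet> v a) + integral {a..b} (\<lambda>x. f x \<bullet> v x)"
proof -
  have cont: "continuous_on S v" "continuous_on S v'" for S
    using d1 d2 by (meson continuous_at_imp_continuous_on has_vector_derivative_continuous)+
  have "(norm (v t))\<^sup>2 - (norm (v s))\<^sup>2
      \<le> integral {s..t} (\<lambda>x. (norm (v x))\<^sup>2) + integral {s..t} (\<lambda>x. (norm (v' x))\<^sup>2)"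
    using \<open>s \<le> t\<close> by (intro sq_norm_increment_le d1 cont)
  also have "\<dots> \<le> integral {a..b} (\<lambda>x. (norm (v x))\<^sup>2) + integral {a..b} (\<lambda>x. (norm (v' x))\<^sup>2)"
    using assms(5-7) cont
    by (intro add_mono integral_subset_le integrable_continuous_real continuous_intros) auto
  also have "integral {a..b} (\<lambda>x. (norm (v' x))\<^sup>2)
      \<le> v' b \<bullet> v b - v' a \<bullet> v a + L0 * integral {a..b} (\<lambda>x. (norm (v x))\<^sup>2)
        + integral {a..b} (\<lambda>x. f x \<bullet> v x)"
    using assms(5-7) by (intro integral_sq_norm_deriv_le[OF d1 d2 ineq fv]) simp
  finally show ?thesis by (simp add: algebra_simps)
qed

lemma sq_norm_le_integral_bound:
  fixes v v' v'' f :: "real \<Rightarrow> 'a::real_inner"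
  assumes d1: "\<And>x. (v has_vector_derivative v' x) (at x)"
    and d2: "\<And>x. (v' has_vector_derivative v'' x) (at x)"
    and ineq: "\<And>x. - (v'' x \<bullet> v x) \<le> L0 * (norm (v x))\<^sup>2 + f x \<bullet> v x"
    and v_int: "(\<lambda>x. (norm (v x))\<^sup>2) integrable_on UNIV"
    and fv_int: "(\<lambda>x. f x \<bullet> v x) integrable_on UNIV" and "L0 \<ge> 0"
  shows "(norm (v t))\<^sup>2
    \<le> (2 + L0) * integral UNIV (\<lambda>x. (norm (v x))\<^sup>2) + integral UNIV (\<lambda>x. f x \<bullet> v x)"
proof (rule field_le_epsilon)
  fix \<epsilon> :: real assume "\<epsilon> > 0"
  define \<delta> where "\<delta> = \<epsilon> / 4"
  have "\<delta> > 0" using \<open>\<epsilon> > 0\<close> by (simp add: \<delta>_def)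
  define g where "g = (\<lambda>x. (norm (v x))\<^sup>2)"
  define P where "P = integral UNIV g"
  define Q where "Q = integral UNIV (\<lambda>x. f x \<bullet> v x)"
  have g_le_P: "integral {a..b} g \<le> P" for a b
    unfolding P_def g_def using v_int
    by (intro integral_subset_le integrable_on_subinterval[OF v_int]) auto
  have g_deriv: "(g has_real_derivative 2 * (v' x \<bullet> v x)) (at x)" for x
    using has_real_derivative_inner[OF d1 d1, of x]
    by (simp add: g_def power2_norm_eq_inner inner_commute)
  have g_nonneg: "g x \<ge> 0" for x by (simp add: g_def)
  have g_int: "g integrable_on {t-1..t-1+1}"
    unfolding g_def by (rule integrable_on_subinterval[OF v_int]) simp
  obtain s where s: "s \<in> {t-1..t}" "g s < P + \<delta>"
    using exists_lt_of_integral_le[OF g_int g_le_P \<open>\<delta> > 0\<close>] by auto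
  obtain n where n: "\<And>a b. a \<le> -n \<Longrightarrow> n \<le> b \<Longrightarrow> \<bar>integral {a..b} (\<lambda>x. f x \<bullet> v x) - Q\<bar> < \<delta>"
    using integral_interval_near_integral_UNIV[OF fv_int \<open>\<delta> > 0\<close>] unfolding Q_def by blast
  \<comment> \<open>The boundary terms of the integration by parts are made small by choosing the endpoints
    where the derivative of the integrable function |v|^2 is small.\<close>
  have "2 * \<delta> > 0" using \<open>\<delta> > 0\<close> by simp
  obtain a where a: "a \<le> min s (-n)" "2 * (v' a \<bullet> v a) \<ge> - (2 * \<delta>)"
    using deriv_ge_at_bot_of_integral_bounded[OF g_deriv g_nonneg g_le_P \<open>2 * \<delta> > 0\<close>]
    by blast
  obtain b where b: "b \<ge> max t n" "2 * (v' b \<bullet> v b) \<le> 2 * \<delta>"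
    using deriv_le_at_top_of_integral_bounded[OF g_deriv g_nonneg g_le_P \<open>2 * \<delta> > 0\<close>]
    by blast
  have "g t \<le> g s + (1 + L0) * integral {a..b} g + (v' b \<bullet> v b - v' a \<bullet> v a)
      + integral {a..b} (\<lambda>x. f x \<bullet> v x)"
    unfolding g_def using a b s
    by (intro sq_norm_le_interval_bound[OF d1 d2 ineq integrable_on_subinterval[OF fv_int]]) auto
  also have "\<dots> \<le> (P + \<delta>) + (1 + L0) * P + 2 * \<delta> + (Q + \<delta>)"
    using a b s n[of a b] g_le_P[of a b] \<open>L0 \<ge> 0\<close> by (intro add_mono mult_left_mono) auto
  finally show "(norm (v t))\<^sup>2 \<le> (2 + L0) * integral UNIV (\<lambda>x. (norm (v x))\<^sup>2)
      + integral UNIV (\<lambda>x. f x \<bullet> v x) + \<epsilon>"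
    by (simp add: g_def P_def Q_def \<delta>_def algebra_simps)
qed

lemma L2_measurable: "u \<in> L2 \<Longrightarrow> u \<in> borel_measurable lebesgue"
  and L2_integrable_sq_norm: "u \<in> L2 \<Longrightarrow> integrable lebesgue (\<lambda>t. (norm (u t))\<^sup>2)"
  by (simp_all add: L2_def)

lemma l2_inner_self: "l2_inner u u = (\<integral>t. (norm (u t))\<^sup>2 \<partial>lebesgue)"
  by (simp add: l2_inner_def power2_norm_eq_inner)

lemma l2_inner_commute: "l2_inner u w = l2_inner w u"
  by (simp add: l2_inner_def inner_commute)

lemma L2_integrable_inner:
  assumes "u \<in> L2" "w \<in> L2"
  shows "integrable lebesgue (\<lambda>t. u t \<bullet> w t)"
proof (rule Bochner_Integration.integrable_bound)
  show "integrable lebesgue (\<lambda>t. ((norm (u t))\<^sup>2 + (norm (w t))\<^sup>2) / 2)"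
    using assms by (simp add: L2_integrable_sq_norm)
  show "(\<lambda>t. u t \<bullet> w t) \<in> borel_measurable lebesgue"
    using L2_measurable[OF assms(1)] L2_measurable[OF assms(2)] by measurable
  have "\<bar>u t \<bullet> w t\<bar> \<le> ((norm (u t))\<^sup>2 + (norm (w t))\<^sup>2) / 2" for t
    using Cauchy_Schwarz_ineq2[of "u t" "w t"] sum_squares_bound[of "norm (u t)" "norm (w t)"]
    by simp
  then show "AE t in lebesgue. norm (u t \<bullet> w t) \<le> norm (((norm (u t))\<^sup>2 + (norm (w t))\<^sup>2) / 2)"
    by simp
qed

lemma L2_add:
  assumes "u \<in> L2" "w \<in> L2"
  shows "(\<lambda>t. u t + w t) \<in> L2"
proof -
  have "(norm (u t + w t))\<^sup>2 = (norm (u t))\<^sup>2 + (norm (w t))\<^sup>2 + 2 * (u t \<bullet> w t)" for t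
    by (simp add: power2_norm_eq_inner inner_add_left inner_add_right inner_commute)
  then show ?thesis
    using L2_integrable_sq_norm[OF assms(1)] L2_integrable_sq_norm[OF assms(2)]
      L2_integrable_inner[OF assms] L2_measurable[OF assms(1)] L2_measurable[OF assms(2)]
    by (simp add: L2_def)
qed

lemma L2_scaleR:
  assumes "u \<in> L2"
  shows "(\<lambda>t. c *\<^sub>R u t) \<in> L2"
  using L2_integrable_sq_norm[OF assms] L2_measurable[OF assms]
  by (simp add: L2_def power_mult_distrib)

lemma L2_diff: "u \<in> L2 \<Longrightarrow> w \<in> L2 \<Longrightarrow> (\<lambda>t. u t - w t) \<in> L2"
  using L2_add[OF _ L2_scaleR, of u w "-1"] by simp

lemma L2_sum:
  fixes K :: nat
  assumes "\<And>k. e k \<in> L2"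
  shows "(\<lambda>t. \<Sum>k<K. c k *\<^sub>R e k t) \<in> L2"
proof (induction K)
  case 0
  then show ?case by (simp add: L2_def)
next
  case (Suc K)
  then show ?case using L2_add[OF Suc L2_scaleR[OF assms]] by simp
qed

lemma l2_inner_diff_left:
  assumes "u \<in> L2" "w \<in> L2" "z \<in> L2"
  shows "l2_inner (\<lambda>t. u t - w t) z = l2_inner u z - l2_inner w z"
  using assms by (simp add: l2_inner_def inner_diff_left L2_integrable_inner)

lemma l2_inner_sum_left:
  fixes K :: nat
  assumes "\<And>k. e k \<in> L2" "z \<in> L2"
  shows "l2_inner (\<lambda>t. \<Sum>k<K. c k *\<^sub>R e k t) z = (\<Sum>k<K. c k * l2_inner (e k) z)"
  using assms by (simp add: l2_inner_def inner_sum_left L2_integrable_inner)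

lemma l2_inner_sum_orthonormal:
  fixes K :: nat
  assumes e_L2: "\<And>k. e k \<in> L2"
    and orth: "\<And>j k. l2_inner (e j) (e k) = (if j = k then 1 else 0)"
  shows "l2_inner (\<lambda>t. \<Sum>k<K. c k *\<^sub>R e k t) (e j) = (if j < K then c j else 0)"
  by (simp add: l2_inner_sum_left[OF e_L2 e_L2] orth if_distrib[of "\<lambda>x. _ * x"] sum.delta cong: if_cong)

lemma l2_inner_sum_sum_orthonormal:
  fixes K :: nat
  assumes e_L2: "\<And>k. e k \<in> L2"
    and orth: "\<And>j k. l2_inner (e j) (e k) = (if j = k then 1 else 0)"
  shows "l2_inner (\<lambda>t. \<Sum>k<K. a k *\<^sub>R e k t) (\<lambda>t. \<Sum>k<K. b k *\<^sub>R e k t) = (\<Sum>k<K. a k * b k)"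
  unfolding l2_inner_sum_left[OF e_L2 L2_sum[OF e_L2]]
  by (intro sum.cong) (auto simp: l2_inner_commute[of "e _"] l2_inner_sum_orthonormal[OF e_L2 orth])

lemma l2_inner_residual:
  fixes K :: nat
  assumes e_L2: "\<And>k. e k \<in> L2"
    and orth: "\<And>j k. l2_inner (e j) (e k) = (if j = k then 1 else 0)"
    and parseval: "\<And>w. w \<in> L2 \<Longrightarrow> (\<lambda>k. (l2_inner w (e k))\<^sup>2) sums l2_inner w w"
    and "u \<in> L2"
  defines "r \<equiv> \<lambda>t. u t - (\<Sum>k<K. l2_inner u (e k) *\<^sub>R e k t)"
  shows "l2_inner r r = (\<Sum>k. (l2_inner u (e k))\<^sup>2) - (\<Sum>k<K. (l2_inner u (e k))\<^sup>2)"
proof -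
  have r_L2: "r \<in> L2" unfolding r_def by (rule L2_diff[OF \<open>u \<in> L2\<close> L2_sum[OF e_L2]])
  have "(l2_inner r (e j))\<^sup>2
      = (l2_inner u (e j))\<^sup>2 - (if j \<in> {..<K} then (l2_inner u (e j))\<^sup>2 else 0)" for j
    unfolding r_def
    by (simp add: l2_inner_diff_left[OF \<open>u \<in> L2\<close> L2_sum[OF e_L2] e_L2]
        l2_inner_sum_orthonormal[OF e_L2 orth])
  then have "(\<lambda>j. (l2_inner u (e j))\<^sup>2 - (if j \<in> {..<K} then (l2_inner u (e j))\<^sup>2 else 0))
      sums l2_inner r r"
    using parseval[OF r_L2] by simp
  moreover have "(\<lambda>j. (l2_inner u (e j))\<^sup>2 - (if j \<in> {..<K} then (l2_inner u (e j))\<^sup>2 else 0))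
      sums ((\<Sum>k. (l2_inner u (e k))\<^sup>2) - (\<Sum>k<K. (l2_inner u (e k))\<^sup>2))"
    using parseval[OF \<open>u \<in> L2\<close>]
    by (intro sums_diff sums_If_finite_set summable_sums) (auto simp: sums_iff)
  ultimately show ?thesis by (rule sums_unique2)
qed

lemma integral_sq_excess_le_l2_dist:
  assumes u: "u \<in> L2" and w: "w \<in> L2" and bound: "\<And>t. norm (w t) \<le> r"
  shows "integrable lebesgue (\<lambda>t. (max (norm (u t) - r) 0)\<^sup>2)"
    and "(\<integral>t. (max (norm (u t) - r) 0)\<^sup>2 \<partial>lebesgue) \<le> l2_inner (\<lambda>t. u t - w t) (\<lambda>t. u t - w t)"
proof -
  have "r \<ge> 0" using norm_ge_zero bound order_trans by blast
  show h_int: "integrable lebesgue (\<lambda>t. (max (norm (u t) - r) 0)\<^sup>2)"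
  proof (rule Bochner_Integration.integrable_bound[OF L2_integrable_sq_norm[OF u]])
    show "(\<lambda>t. (max (norm (u t) - r) 0)\<^sup>2) \<in> borel_measurable lebesgue"
      using L2_measurable[OF u] by measurable
    show "AE t in lebesgue. norm ((max (norm (u t) - r) 0)\<^sup>2) \<le> norm ((norm (u t))\<^sup>2)"
      using \<open>r \<ge> 0\<close> by (auto intro!: power_mono)
  qed
  have "(max (norm (u t) - r) 0)\<^sup>2 \<le> (norm (u t - w t))\<^sup>2" for t
    using norm_triangle_sub[of "u t" "w t"] bound[of t] by (intro power_mono) auto
  then show "(\<integral>t. (max (norm (u t) - r) 0)\<^sup>2 \<partial>lebesgue) \<le> l2_inner (\<lambda>t. u t - w t) (\<lambda>t. u t - w t)"
    unfolding l2_inner_self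
    by (intro integral_mono h_int L2_integrable_sq_norm[OF L2_diff[OF u w]])
qed

lemma ae_norm_le_of_partial_sums_le:
  assumes e_L2: "\<And>k. e k \<in> L2"
    and orth: "\<And>j k. l2_inner (e j) (e k) = (if j = k then 1 else 0)"
    and parseval: "\<And>w. w \<in> L2 \<Longrightarrow> (\<lambda>k. (l2_inner w (e k))\<^sup>2) sums l2_inner w w"
    and u_L2: "u \<in> L2"
    and bound: "\<And>K t. norm (\<Sum>k<K. l2_inner u (e k) *\<^sub>R e k t) \<le> r"
  shows "AE t in lebesgue. norm (u t) \<le> r"
proof -
  define S where "S = (\<Sum>k. (l2_inner u (e k))\<^sup>2)"
  define h where "h = (\<lambda>t. (max (norm (u t) - r) 0)\<^sup>2)"
  have h_le: "integral\<^sup>L lebesgue h \<le> S - (\<Sum>k<K. (l2_inner u (e k))\<^sup>2)" for K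
    using integral_sq_excess_le_l2_dist(2)[OF u_L2 L2_sum[OF e_L2] bound[where K=K]]
      l2_inner_residual[OF e_L2 orth parseval u_L2, of K]
    by (simp add: S_def h_def)
  have "(\<lambda>K. S - (\<Sum>k<K. (l2_inner u (e k))\<^sup>2)) \<longlonglongrightarrow> S - S"
    unfolding S_def using parseval[OF u_L2]
    by (intro tendsto_diff tendsto_const summable_LIMSEQ) (auto simp: sums_iff)
  then have "integral\<^sup>L lebesgue h \<le> S - S"
    by (rule LIMSEQ_le_const) (use h_le in blast)
  moreover have "integral\<^sup>L lebesgue h \<ge> 0"
    by (simp add: h_def)
  ultimately have "integral\<^sup>L lebesgue h = 0"
    by linarith
  then have "AE t in lebesgue. h t = 0"
    using integral_nonneg_eq_0_iff_AE[OF
      integral_sq_excess_le_l2_dist(1)[OF u_L2 L2_sum[OF e_L2] bound[where K=0]]] by (simp add: h_def)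
  then show ?thesis
    by eventually_elim (auto simp: h_def max_def split: if_splits)
qed

lemma integral_UNIV_eq_l2_inner:
  assumes "u \<in> L2" "w \<in> L2"
  shows "integral UNIV (\<lambda>x. u x \<bullet> w x) = l2_inner u w"
  using integral_lebesgue[OF L2_integrable_inner[OF assms]] by (simp add: l2_inner_def)

lemma has_vector_derivative_lincomb:
  assumes "\<And>k. (e k has_vector_derivative e' k t) (at t)"
  shows "((\<lambda>t. \<Sum>k<K. c k *\<^sub>R e k t) has_vector_derivative (\<Sum>k<K. c k *\<^sub>R e' k t)) (at t)"
  by (intro has_vector_derivative_sum
      bounded_linear.has_vector_derivative[OF bounded_linear_scaleR_right] assms)

lemma eigen_onbD:
  assumes "eigen_onb L lam e"
  shows "mono lam" and "\<And>k. e k \<in> L2"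
    and "\<And>j k. l2_inner (e j) (e k) = (if j = k then 1 else 0)"
    and "\<And>u. u \<in> L2 \<Longrightarrow> (\<lambda>k. (l2_inner u (e k))\<^sup>2) sums l2_inner u u"
  using assms by (auto simp: eigen_onb_def is_eigenfun_def)

lemma eigen_onb_obtains_derivatives:
  assumes "eigen_onb L lam e"
  obtains e' e'' where "\<And>k t. (e k has_vector_derivative e' k t) (at t)"
    and "\<And>k t. (e' k has_vector_derivative e'' k t) (at t)"
    and "\<And>k t. - e'' k t + L t *v e k t = lam k *\<^sub>R e k t"
proof -
  have "\<forall>k. \<exists>e' e''. \<forall>t. (e k has_vector_derivative e' t) (at t)
      \<and> (e' has_vector_derivative e'' t) (at t) \<and> - e'' t + L t *v e k t = lam k *\<^sub>R e k t"
    using assms by (auto simp: eigen_onb_def is_eigenfun_def)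
  then show thesis
    using that by metis
qed

lemma eigenvalue_nbar_le:
  assumes "mono lam" and "lam k > 0"
  shows "lam (nbar lam) \<le> lam k"
proof -
  have "{j. lam j \<le> 0} \<subseteq> {..<k}"
    using assms by (auto simp: not_less intro: ccontr dest: monoD[of lam k])
  then have "nbar lam \<le> k"
    unfolding nbar_def using card_mono[of "{..<k}"] by fastforce
  then show ?thesis by (rule monoD[OF \<open>mono lam\<close>])
qed

lemma matrix_vector_mult_sum:
  fixes A :: "real^'n^'m"
  shows "A *v (\<Sum>k<K. c k *\<^sub>R x k) = (\<Sum>k<K. c k *\<^sub>R (A *v x k))"
  by (simp add: linear_sum[OF matrix_vector_mul_linear] matrix_vector_mult_scaleR)

lemma eigen_partial_sum_sq_norm_le:
  fixes K :: nat
  assumes onb: "eigen_onb L lam e" and "L0 \<ge> 0"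
    and L_lower: "\<And>t x. (L t *v x) \<bullet> x \<ge> - L0 * (norm x)\<^sup>2"
  shows "(norm (\<Sum>k<K. c k *\<^sub>R e k t))\<^sup>2
    \<le> (2 + L0) * (\<Sum>k<K. (c k)\<^sup>2) + (\<Sum>k<K. lam k * (c k)\<^sup>2)"
proof -
  obtain e' e'' where d1: "\<And>k t. (e k has_vector_derivative e' k t) (at t)"
    and d2: "\<And>k t. (e' k has_vector_derivative e'' k t) (at t)"
    and eigen: "\<And>k t. - e'' k t + L t *v e k t = lam k *\<^sub>R e k t"
    using eigen_onb_obtains_derivatives[OF onb] by blast
  note e_L2 = eigen_onbD(2)[OF onb] and orth = eigen_onbD(3)[OF onb]
  define v where "v = (\<lambda>t. \<Sum>k<K. c k *\<^sub>R e k t)"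
  define f where "f = (\<lambda>t. \<Sum>k<K. (lam k * c k) *\<^sub>R e k t)"
  have v_L2: "v \<in> L2" and f_L2: "f \<in> L2"
    unfolding v_def f_def by (rule L2_sum[OF e_L2])+
  have "e'' k t = L t *v e k t - lam k *\<^sub>R e k t" for k t
    using eigen[of k t] by (simp add: algebra_simps)
  then have v'': "(\<Sum>k<K. c k *\<^sub>R e'' k t) = L t *v v t - f t" for t
    by (simp add: v_def f_def matrix_vector_mult_sum scaleR_diff_right sum_subtractf
        mult.commute)
  have "(norm (v t))\<^sup>2
      \<le> (2 + L0) * integral UNIV (\<lambda>x. (norm (v x))\<^sup>2) + integral UNIV (\<lambda>x. f x \<bullet> v x)"
  proof (rule sq_norm_le_integral_bound)
    show "(v has_vector_derivative (\<Sum>k<K. c k *\<^sub>R e' k t)) (at t)" for t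
      unfolding v_def by (rule has_vector_derivative_lincomb[OF d1])
    show "((\<lambda>t. \<Sum>k<K. c k *\<^sub>R e' k t) has_vector_derivative (\<Sum>k<K. c k *\<^sub>R e'' k t)) (at t)"
      for t by (rule has_vector_derivative_lincomb[OF d2])
    show "- ((\<Sum>k<K. c k *\<^sub>R e'' k t) \<bullet> v t) \<le> L0 * (norm (v t))\<^sup>2 + f t \<bullet> v t" for t
      using L_lower[where t=t and x="v t"] by (simp add: v'' inner_diff_left)
    show "(\<lambda>x. (norm (v x))\<^sup>2) integrable_on UNIV"
      by (rule integrable_on_lebesgue[OF L2_integrable_sq_norm[OF v_L2]])
    show "(\<lambda>x. f x \<bullet> v x) integrable_on UNIV"
      by (rule integrable_on_lebesgue[OF L2_integrable_inner[OF f_L2 v_L2]])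
  qed fact
  also have "\<dots> = (2 + L0) * l2_inner v v + l2_inner f v"
    by (simp add: power2_norm_eq_inner integral_UNIV_eq_l2_inner v_L2 f_L2)
  also have "\<dots> = (2 + L0) * (\<Sum>k<K. (c k)\<^sup>2) + (\<Sum>k<K. lam k * (c k)\<^sup>2)"
    unfolding v_def f_def l2_inner_sum_sum_orthonormal[OF e_L2 orth]
    by (simp add: power2_eq_square mult.assoc)
  finally show ?thesis by (simp only: v_def)
qed

lemma Eplus_coeff_eq_0: "u \<in> Eplus lam e \<Longrightarrow> lam k \<le> 0 \<Longrightarrow> l2_inner u (e k) = 0"
  by (simp add: Eplus_def)

lemma Eplus_weighted_coeff_nonneg:
  "u \<in> Eplus lam e \<Longrightarrow> 0 \<le> lam k * (l2_inner u (e k))\<^sup>2"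
  using Eplus_coeff_eq_0[of u lam e k] by (cases "lam k \<le> 0") auto

lemma Eplus_weighted_coeff_ge:
  assumes "mono lam" and "u \<in> Eplus lam e"
  shows "lam (nbar lam) * (l2_inner u (e k))\<^sup>2 \<le> lam k * (l2_inner u (e k))\<^sup>2"
  using Eplus_coeff_eq_0[OF assms(2), of k] eigenvalue_nbar_le[OF assms(1), of k]
  by (cases "lam k \<le> 0") (auto intro: mult_right_mono)

lemma Enorm_Eplus:
  assumes "u \<in> Eplus lam e"
  shows "summable (\<lambda>k. lam k * (l2_inner u (e k))\<^sup>2)"
    and "Enorm lam e u = sqrt (\<Sum>k. lam k * (l2_inner u (e k))\<^sup>2)"
proof -
  have weights: "(if lam k = 0 then 1 else \<bar>lam k\<bar>) * (l2_inner u (e k))\<^sup>2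
      = lam k * (l2_inner u (e k))\<^sup>2"
    and abs_weights: "\<bar>lam k\<bar> * (l2_inner u (e k))\<^sup>2 = lam k * (l2_inner u (e k))\<^sup>2" for k
    using Eplus_coeff_eq_0[OF assms, of k] by auto
  have "summable (\<lambda>k. \<bar>lam k\<bar> * (l2_inner u (e k))\<^sup>2)"
    using assms by (simp add: Eplus_def Espace_def)
  then show "summable (\<lambda>k. lam k * (l2_inner u (e k))\<^sup>2)"
    by (simp only: abs_weights)
  show "Enorm lam e u = sqrt (\<Sum>k. lam k * (l2_inner u (e k))\<^sup>2)"
    by (simp add: Enorm_def weights)
qed

lemma Enorm_nonneg_Eplus: "u \<in> Eplus lam e \<Longrightarrow> 0 \<le> Enorm lam e u"
  by (simp add: Enorm_Eplus suminf_nonneg Eplus_weighted_coeff_nonneg)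

lemma Enorm_sq_sums_Eplus:
  assumes "u \<in> Eplus lam e"
  shows "(\<lambda>k. lam k * (l2_inner u (e k))\<^sup>2) sums (Enorm lam e u)\<^sup>2"
  using Enorm_Eplus[OF assms]
    suminf_nonneg[OF Enorm_Eplus(1)[OF assms] Eplus_weighted_coeff_nonneg[OF assms]]
  by (simp add: summable_sums)

lemma Eplus_imp_L2: "u \<in> Eplus lam e \<Longrightarrow> u \<in> L2"
  by (simp add: Eplus_def Espace_def)

lemma Ifun_Eplus:
  assumes "u \<in> Eplus lam e"
  shows "Ifun lam e W u = (Enorm lam e u)\<^sup>2 / 2 - (\<integral>t. W t (u t) \<partial>lebesgue)"
proof -
  have pos: "(if lam k > 0 then lam k else 0) * (l2_inner u (e k))\<^sup>2
      = lam k * (l2_inner u (e k))\<^sup>2"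
    and neg: "(if lam k < 0 then - lam k else 0) * (l2_inner u (e k))\<^sup>2 = 0" for k
    using Eplus_coeff_eq_0[OF assms, of k] by auto
  show ?thesis
    unfolding Ifun_def pos neg sums_unique[OF Enorm_sq_sums_Eplus[OF assms], symmetric] by simp
qed

lemma Eplus_l2_inner_self_le_Enorm:
  assumes onb: "eigen_onb L lam e" and u: "u \<in> Eplus lam e"
  shows "lam (nbar lam) * l2_inner u u \<le> (Enorm lam e u)\<^sup>2"
proof -
  have "(\<lambda>k. lam (nbar lam) * (l2_inner u (e k))\<^sup>2) sums (lam (nbar lam) * l2_inner u u)"
    using eigen_onbD(4)[OF onb Eplus_imp_L2[OF u]] by (rule sums_mult)
  then show ?thesis
    by (rule sums_le[OF Eplus_weighted_coeff_ge[OF eigen_onbD(1)[OF onb] u] _ Enorm_sq_sums_Eplus[OF u]])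
qed

lemma Eplus_partial_sum_sq_norm_le:
  fixes K :: nat
  assumes onb: "eigen_onb L lam e" and "L0 \<ge> 0"
    and L_lower: "\<And>t x. (L t *v x) \<bullet> x \<ge> - L0 * (norm x)\<^sup>2"
    and u: "u \<in> Eplus lam e" and "lam (nbar lam) > 0"
  shows "(norm (\<Sum>k<K. l2_inner u (e k) *\<^sub>R e k t))\<^sup>2
    \<le> ((2 + L0) / lam (nbar lam) + 1) * (Enorm lam e u)\<^sup>2"
proof -
  define c where "c = (\<lambda>k. l2_inner u (e k))"
  define lam0 where "lam0 = lam (nbar lam)"
  have partial: "(\<Sum>k<K. lam k * (c k)\<^sup>2) \<le> (Enorm lam e u)\<^sup>2"
    using sum_le_suminf[OF sums_summable[OF Enorm_sq_sums_Eplus[OF u]], of "{..<K}"]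
      Eplus_weighted_coeff_nonneg[OF u] sums_unique[OF Enorm_sq_sums_Eplus[OF u]]
    by (simp add: c_def)
  have "lam0 * (\<Sum>k<K. (c k)\<^sup>2) \<le> (\<Sum>k<K. lam k * (c k)\<^sup>2)"
    unfolding sum_distrib_left c_def lam0_def
    by (intro sum_mono Eplus_weighted_coeff_ge[OF eigen_onbD(1)[OF onb] u])
  then have coeffs: "(\<Sum>k<K. (c k)\<^sup>2) \<le> (Enorm lam e u)\<^sup>2 / lam0"
    using partial \<open>lam (nbar lam) > 0\<close> by (simp add: lam0_def field_simps)
  have "(norm (\<Sum>k<K. c k *\<^sub>R e k t))\<^sup>2
      \<le> (2 + L0) * (\<Sum>k<K. (c k)\<^sup>2) + (\<Sum>k<K. lam k * (c k)\<^sup>2)"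
    by (rule eigen_partial_sum_sq_norm_le[OF onb \<open>L0 \<ge> 0\<close> L_lower])
  also have "\<dots> \<le> (2 + L0) * ((Enorm lam e u)\<^sup>2 / lam0) + (Enorm lam e u)\<^sup>2"
    using coeffs partial \<open>L0 \<ge> 0\<close> by (intro add_mono mult_left_mono) auto
  also have "\<dots> = ((2 + L0) / lam0 + 1) * (Enorm lam e u)\<^sup>2"
    by (simp add: field_simps)
  finally show ?thesis by (simp add: c_def lam0_def)
qed

lemma Eplus_ae_norm_le:
  assumes onb: "eigen_onb L lam e" and "L0 \<ge> 0"
    and L_lower: "\<And>t x. (L t *v x) \<bullet> x \<ge> - L0 * (norm x)\<^sup>2"
    and u: "u \<in> Eplus lam e" and "lam (nbar lam) > 0"
  shows "AE t in lebesgue. norm (u t) \<le> sqrt ((2 + L0) / lam (nbar lam) + 1) * Enorm lam e u"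
proof (rule ae_norm_le_of_partial_sums_le[OF eigen_onbD(2-4)[OF onb] Eplus_imp_L2[OF u]])
  fix K t
  have "norm (\<Sum>k<K. l2_inner u (e k) *\<^sub>R e k t)
      \<le> sqrt (((2 + L0) / lam (nbar lam) + 1) * (Enorm lam e u)\<^sup>2)"
    by (rule real_le_rsqrt[OF Eplus_partial_sum_sq_norm_le[OF assms]])
  also have "\<dots> = sqrt ((2 + L0) / lam (nbar lam) + 1) * Enorm lam e u"
    using Enorm_nonneg_Eplus[OF u] by (simp add: real_sqrt_mult)
  finally show "norm (\<Sum>k<K. l2_inner u (e k) *\<^sub>R e k t)
      \<le> sqrt ((2 + L0) / lam (nbar lam) + 1) * Enorm lam e u" .
qed

lemma abs_le_quadratic_imp_nonneg:
  fixes F :: "'a \<Rightarrow> 'b::{real_normed_vector, perfect_space} \<Rightarrow> real"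
  assumes "r > 0" and "\<And>t x. norm x \<le> r \<Longrightarrow> \<bar>F t x\<bar> \<le> A * (norm x)\<^sup>2"
  shows "A \<ge> 0"
proof -
  obtain x :: 'b where "norm x = r"
    using vector_choose_size[OF less_imp_le[OF \<open>r > 0\<close>]] by blast
  then have "\<bar>F t x\<bar> \<le> A * r\<^sup>2" for t
    using assms(2)[of x t] by simp
  then have "0 \<le> A * r\<^sup>2"
    using abs_ge_zero order_trans by blast
  then show ?thesis using \<open>r > 0\<close> by (simp add: zero_le_mult_iff)
qed

lemma integral_le_of_ae_norm_le:
  fixes u :: "real \<Rightarrow> real^'n" and F :: "real \<Rightarrow> real^'n \<Rightarrow> real"
  assumes u: "u \<in> L2" and bounded: "AE t in lebesgue. norm (u t) \<le> r"
    and F: "\<And>t x. norm x \<le> r \<Longrightarrow> \<bar>F t x\<bar> \<le> A * (norm x)\<^sup>2" and "A \<ge> 0"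
  shows "(\<integral>t. F t (u t) \<partial>lebesgue) \<le> A * l2_inner u u"
proof (cases "integrable lebesgue (\<lambda>t. F t (u t))")
  case True
  have "AE t in lebesgue. F t (u t) \<le> A * (norm (u t))\<^sup>2"
  proof (rule eventually_mono[OF bounded])
    fix t assume "norm (u t) \<le> r"
    then show "F t (u t) \<le> A * (norm (u t))\<^sup>2"
      using F[where t=t and x="u t"] by simp
  qed
  then have "(\<integral>t. F t (u t) \<partial>lebesgue) \<le> (\<integral>t. A * (norm (u t))\<^sup>2 \<partial>lebesgue)"
    using L2_integrable_sq_norm[OF u] by (intro integral_mono_AE True) auto
  then show ?thesis by (simp add: l2_inner_self)
next
  case False
  then show ?thesis
    using \<open>A \<ge> 0\<close> by (simp add: not_integrable_integral_eq l2_inner_self)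
qed

theorem lemma2p4:
  fixes L :: "real \<Rightarrow> real^'n^'n"
    and W :: "real \<Rightarrow> real^'n \<Rightarrow> real"
    and gradW :: "real \<Rightarrow> real^'n \<Rightarrow> real^'n"
    and lam :: "nat \<Rightarrow> real"
    and e :: "nat \<Rightarrow> real \<Rightarrow> real^'n"
    and b1 b2 b3 r1 r2 sigma0 eps0 rinf \<mu> :: real
  assumes L_cont: "continuous_on UNIV L"
    and L_sym: "\<And>t. transpose (L t) = L t"
    and W_C1: "\<exists>W'. (\<forall>p. ((\<lambda>p. W (fst p) (snd p)) has_derivative blinfun_apply (W' p)) (at p))
                     \<and> continuous_on UNIV W'"
    and gradW: "\<And>t x. (W t has_derivative (\<lambda>h. gradW t x \<bullet> h)) (at x)"
    and L1: "\<exists>alpha0 M. alpha0 > 1 \<and> M > 0 \<and>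
              ((\<lambda>R. emeasure lebesgue {t. \<bar>t\<bar> \<ge> R \<and> lmin L t \<le> M * \<bar>t\<bar> * (ln \<bar>t\<bar>) powr alpha0})
                 \<longlongrightarrow> 0) at_top"
    and L2: "\<exists>L0>0. \<forall>t x. (L t *v x) \<bullet> x \<ge> - L0 * (norm x)\<^sup>2"
    and onb: "eigen_onb L lam e"
    and W1: "\<And>t. W t 0 = 0" "\<And>t x. norm (gradW t x) \<le> b1 * norm x"
    and W2: "b2 > 0" "r1 > 0" "\<mu> > 1"
            "\<And>t x. norm x \<ge> r1 \<Longrightarrow> 2 * W t x - gradW t x \<bullet> x \<ge> b2 * norm x powr \<mu>"
    and W3: "b3 > 0" "\<And>t x. norm x < r1 \<Longrightarrow> 2 * W t x - gradW t x \<bullet> x \<ge> - b3 * norm x"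
    and W4: "r2 > 0" "sigma0 > 0"
            "\<And>t x. norm x \<le> r2 \<Longrightarrow> \<bar>W t x\<bar> \<le> (lam (nbar lam) - sigma0) / 2 * (norm x)\<^sup>2"
    and W5: "eps0 > 0" "rinf > 0"
            "\<And>t x. norm x \<ge> rinf \<Longrightarrow> W t x \<ge> (lam (nbar lam) / 2 + eps0) * (norm x)\<^sup>2"
    and W6: "\<And>t x. W t x \<ge> 0"
  shows "\<exists>\<alpha>>0. \<exists>\<rho>>0. \<forall>u\<in>Eplus lam e. Enorm lam e u = \<rho> \<longrightarrow> Ifun lam e W u \<ge> \<alpha>"
proof -
  obtain L0 where "L0 > 0" and L_lower: "\<And>t x. (L t *v x) \<bullet> x \<ge> - L0 * (norm x)\<^sup>2"
    using L2 by blast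
  define lam0 where "lam0 = lam (nbar lam)"
  define C where "C = (2 + L0) / lam0 + 1"
  define \<rho> where "\<rho> = r2 / sqrt C"
  have "sigma0 \<le> lam0"
    using abs_le_quadratic_imp_nonneg[OF W4(1) W4(3)] by (simp add: lam0_def)
  then have "lam0 > 0" using W4(2) by simp
  then have "C > 0" using \<open>L0 > 0\<close> by (simp add: C_def add_pos_pos)
  then have "\<rho> > 0" and "sqrt C * \<rho> = r2"
    using W4(1) by (simp_all add: \<rho>_def)
  show ?thesis
  proof (intro exI conjI ballI impI)
    show "sigma0 * \<rho>\<^sup>2 / (2 * lam0) > 0" using W4(2) \<open>\<rho> > 0\<close> \<open>lam0 > 0\<close> by simp
    show "\<rho> > 0" by fact
    fix u assume u: "u \<in> Eplus lam e" and "Enorm lam e u = \<rho>"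
    have "AE t in lebesgue. norm (u t) \<le> r2"
      using Eplus_ae_norm_le[OF onb _ L_lower u] \<open>L0 > 0\<close> \<open>lam0 > 0\<close> \<open>sqrt C * \<rho> = r2\<close>
        \<open>Enorm lam e u = \<rho>\<close> by (simp add: C_def lam0_def)
    then have "(\<integral>t. W t (u t) \<partial>lebesgue) \<le> (lam0 - sigma0) / 2 * l2_inner u u"
      using \<open>sigma0 \<le> lam0\<close> W4(3) unfolding lam0_def
      by (intro integral_le_of_ae_norm_le[OF Eplus_imp_L2[OF u]]) auto
    also have "\<dots> \<le> (lam0 - sigma0) / 2 * (\<rho>\<^sup>2 / lam0)"
      using Eplus_l2_inner_self_le_Enorm[OF onb u] \<open>Enorm lam e u = \<rho>\<close> \<open>sigma0 \<le> lam0\<close> \<open>lam0 > 0\<close>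
      by (intro mult_left_mono) (auto simp: lam0_def field_simps)
    finally show "sigma0 * \<rho>\<^sup>2 / (2 * lam0) \<le> Ifun lam e W u"
      using \<open>lam0 > 0\<close> by (simp add: Ifun_Eplus[OF u] \<open>Enorm lam e u = \<rho>\<close> field_simps)
  qed
qed

end
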